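(* In the setting of the context, there exist elements $w_{ki}\in\overline{M'}$ ($1\le k\le r$, $2\le i\le n_k$) such that (1) $\langle w_{ki},\tilde e_{k1}\rangle=-1$ and $\langle w_{ki},\tilde e_{ki}\rangle=1$; (2) $\langle w_{ki},\tilde e_{lj}\rangle=0$ for all $\tilde e_{lj}\ne\tilde e_{k1},\tilde e_{ki}$; (3) $\langle w_{ki},e_{lj}\rangle=0$ for all $e_{lj}$. Moreover, for any elements $w_{ki}$ satisfying (1)–(3), $$\operatorname{Ann}(e)'=\operatorname{Ann}(e,\tilde e)\oplus\bigoplus_{k=1}^r\bigoplus_{i=2}^{n_k}\mathbb{Z}w_{ki}.$$
   Context: $M\cong\mathbb{Z}^d$, $N$ dual. $\{\Delta_1,\dots,\Delta_s\}$ is a nef-partition (lattice polytopes in $M_\mathbb{R}$ containing $0$ with reflexive Minkowski sum) of the $d$-dimensional reflexive polytope $\operatorname{Conv}(\cup\Delta_i)$, with dual nef-partition $\nabla_j=\{y:\langle x,y\rangle\ge-\delta_{ij}\ \forall x\in\Delta_i,\forall i\}$. $\overline M=\mathbb{Z}^s\oplus M$, $\overline N=\mathbb{Z}^s\oplus N$ with natural pairing; $K=\{(a;x):a_i\ge0,x\in\sum a_i\Delta_i\}$, $K^\vee$ its dual cone; $e_i=(\epsilon_i;0)$ ($\epsilon_i$ standard basis vectors of $\mathbb{Z}^s$), $\deg^\vee=\sum e_i$. Let $\tilde e_i=(\epsilon_i;p_i)\in K^\vee\cap\overline N$ with $p_i\in N\cap\nabla_i$ and $\sum_i\tilde e_i=\deg^\vee$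 (so $\sum p_i=0$). Let $r=s-\dim\operatorname{Span}_\mathbb{R}\{p_i\}$ and let $\{1,\dots,s\}=I_1\sqcup\dots\sqcup I_r$ with $I_k$ nonempty, $\sum_{i\in I_k}p_i=0$. Write $n_k=\#I_k$, $I_k=\{k1,\dots,kn_k\}$ and index $e_{ki},\tilde e_{ki},p_{ki}$ accordingly; $\{p_{ki}:2\le i\le n_k,1\le k\le r\}$ is $\mathbb{R}$-linearly independent. Choose $\xi_1,\dots,\xi_{d+r-s}\in N$ whose images form a basis of the free part of $N/\sum_{k,i}\mathbb{Z}p_{ki}$, set $N'=\operatorname{Span}_\mathbb{Z}(\{p_{ki}:i\ge2\}\cup\{\xi_j\})$, $M'=\operatorname{Hom}(N',\mathbb{Z})\supset M$, $\overline{M'}=\mathbb{Z}^s\oplus M'$ (dual to $\mathbb{Z}^s\oplus N'$, which contains all $e_i,\tilde e_i$). $\operatorname{Ann}(e)'=\{m\in\overline{M'}:\langle m,e_i\rangle=0\ \forall i\}$ and $\operatorname{Ann}(e,\tilde e)=\{m\in\overline{M'}:\langle m,e_i\rangle=\langle m,\tilde e_j\rangle=0\ \forall i,j\}$ (which equals the corresponding sublattice of $\overline M$). *)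

theory Defs
  imports "HOL-Analysis.Analysis"
begin

text \<open>Coordinates: M_R = N_R = real^'n (d = CARD('n)), with M = N = integer vectors
  and the standard dot product as the pairing (choice of a basis of M and the dual basis of N).
  The index set {1..s} of the nef-partition is written as the pairs (k,i), 1<=k<=r, 1<=i<=n k,
  i.e. I_k = {(k,1),...,(k,n k)}.\<close>

definition lattice_pts :: "(real^'n) set" where
  "lattice_pts = {x. \<forall>i. x $ i \<in> \<int>}"

definition lattice_polytope :: "(real^'n) set \<Rightarrow> bool" where
  "lattice_polytope P \<longleftrightarrow> (\<exists>S. finite S \<and> S \<noteq> {} \<and> S \<subseteq> lattice_pts \<and> P = convex hull S)"

definition polar_dual :: "(real^'n) set \<Rightarrow> (real^'n) set" where
  "polar_dual P = {y. \<forall>x\<in>P. x \<bullet> y \<ge> -1}"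

definition reflexive_polytope :: "(real^'n) set \<Rightarrow> bool" where
  "reflexive_polytope P \<longleftrightarrow> lattice_polytope P \<and> 0 \<in> interior P \<and> lattice_polytope (polar_dual P)"

definition minkowski_sum :: "'i set \<Rightarrow> ('i \<Rightarrow> (real^'n) set) \<Rightarrow> (real^'n) set" where
  "minkowski_sum I D = {(\<Sum>j\<in>I. x j) | x. \<forall>j\<in>I. x j \<in> D j}"

definition nef_partition :: "'i set \<Rightarrow> ('i \<Rightarrow> (real^'n) set) \<Rightarrow> bool" where
  "nef_partition I D \<longleftrightarrow> finite I \<and> (\<forall>j\<in>I. lattice_polytope (D j) \<and> 0 \<in> D j)
     \<and> reflexive_polytope (minkowski_sum I D)
     \<and> reflexive_polytope (convex hull (\<Union>j\<in>I. D j))"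

definition nabla :: "'i set \<Rightarrow> ('i \<Rightarrow> (real^'n) set) \<Rightarrow> 'i \<Rightarrow> (real^'n) set" where
  "nabla I D j = {y. \<forall>i\<in>I. \<forall>x\<in>D i. x \<bullet> y \<ge> - (if i = j then 1 else 0)}"

definition Kcone :: "'i set \<Rightarrow> ('i \<Rightarrow> (real^'n) set) \<Rightarrow> (('i \<Rightarrow> real) \<times> (real^'n)) set" where
  "Kcone I D = {(a, x). (\<forall>j. j \<notin> I \<longrightarrow> a j = 0) \<and> (\<forall>j\<in>I. a j \<ge> 0) \<and>
      (\<exists>y. (\<forall>j\<in>I. y j \<in> D j) \<and> x = (\<Sum>j\<in>I. a j *\<^sub>R y j))}"

definition Kdual :: "'i set \<Rightarrow> ('i \<Rightarrow> (real^'n) set) \<Rightarrow> (('i \<Rightarrow> real) \<times> (real^'n)) set" where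
  "Kdual I D = {(b, y). (\<forall>j. j \<notin> I \<longrightarrow> b j = 0) \<and>
      (\<forall>(a, x)\<in>Kcone I D. (\<Sum>j\<in>I. a j * b j) + x \<bullet> y \<ge> 0)}"

definition Idx :: "nat \<Rightarrow> (nat \<Rightarrow> nat) \<Rightarrow> (nat \<times> nat) set" where
  "Idx r n = {(k, i). 1 \<le> k \<and> k \<le> r \<and> 1 \<le> i \<and> i \<le> n k}"

definition Idx2 :: "nat \<Rightarrow> (nat \<Rightarrow> nat) \<Rightarrow> (nat \<times> nat) set" where
  "Idx2 r n = {(k, i). 1 \<le> k \<and> k \<le> r \<and> 2 \<le> i \<and> i \<le> n k}"

text \<open>The xi_j (j = 1..t) are integer vectors whose images form a basis of the free part of
  N / (sum of Z p), i.e. a Z-basis of the torsion-free quotient N / (N \<inter> span_R {p}).\<close>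
definition free_part_basis :: "(real^'n) set \<Rightarrow> nat \<Rightarrow> (nat \<Rightarrow> real^'n) \<Rightarrow> bool" where
  "free_part_basis P t \<xi> \<longleftrightarrow>
     (\<forall>j\<in>{1..t}. \<xi> j \<in> lattice_pts) \<and>
     (\<forall>y\<in>lattice_pts. \<exists>c::nat \<Rightarrow> int. y - (\<Sum>j=1..t. of_int (c j) *\<^sub>R \<xi> j) \<in> span P) \<and>
     (\<forall>c::nat \<Rightarrow> int. (\<Sum>j=1..t. of_int (c j) *\<^sub>R \<xi> j) \<in> span P \<longrightarrow> (\<forall>j\<in>{1..t}. c j = 0))"

definition int_span :: "(real^'n) set \<Rightarrow> (real^'n) set" where
  "int_span X = {y. \<exists>c::real^'n \<Rightarrow> int. y = (\<Sum>v\<in>X. of_int (c v) *\<^sub>R v)}"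

text \<open>M' = Hom(N', Z), realised inside M_R.\<close>
definition dual_lattice :: "(real^'n) set \<Rightarrow> (real^'n) set" where
  "dual_lattice L = {m. \<forall>y\<in>L. m \<bullet> y \<in> \<int>}"

text \<open>Elements of Z^s + M' and Z^s + N': pairs (a, m) with a supported on the index set.\<close>
definition bpair :: "'i set \<Rightarrow> ('i \<Rightarrow> int) \<times> (real^'n) \<Rightarrow> ('i \<Rightarrow> int) \<times> (real^'n) \<Rightarrow> real" where
  "bpair I x y = of_int (\<Sum>j\<in>I. fst x j * fst y j) + snd x \<bullet> snd y"

definition ebar :: "'i \<Rightarrow> ('i \<Rightarrow> int) \<times> (real^'n)" where
  "ebar j = ((\<lambda>l. if l = j then 1 else 0), 0)"

definition etil :: "('i \<Rightarrow> real^'n) \<Rightarrow> 'i \<Rightarrow> ('i \<Rightarrow> int) \<times> (real^'n)" where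
  "etil p j = ((\<lambda>l. if l = j then 1 else 0), p j)"

definition Mbar :: "'i set \<Rightarrow> (real^'n) set \<Rightarrow> (('i \<Rightarrow> int) \<times> (real^'n)) set" where
  "Mbar I M = {x. (\<forall>j. j \<notin> I \<longrightarrow> fst x j = 0) \<and> snd x \<in> M}"

definition AnnE :: "'i set \<Rightarrow> (real^'n) set \<Rightarrow> (('i \<Rightarrow> int) \<times> (real^'n)) set" where
  "AnnE I M = {x \<in> Mbar I M. \<forall>j\<in>I. bpair I x (ebar j) = 0}"

definition AnnEEt :: "'i set \<Rightarrow> (real^'n) set \<Rightarrow> ('i \<Rightarrow> real^'n) \<Rightarrow> (('i \<Rightarrow> int) \<times> (real^'n)) set" where
  "AnnEEt I M p = {x \<in> Mbar I M. \<forall>j\<in>I. bpair I x (ebar j) = 0 \<and> bpair I x (etil p j) = 0}"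

definition badd :: "('i \<Rightarrow> int) \<times> (real^'n) \<Rightarrow> ('i \<Rightarrow> int) \<times> (real^'n) \<Rightarrow> ('i \<Rightarrow> int) \<times> (real^'n)" where
  "badd x y = ((\<lambda>j. fst x j + fst y j), snd x + snd y)"

definition blincomb :: "'q set \<Rightarrow> ('q \<Rightarrow> int) \<Rightarrow> ('q \<Rightarrow> ('i \<Rightarrow> int) \<times> (real^'n)) \<Rightarrow> ('i \<Rightarrow> int) \<times> (real^'n)" where
  "blincomb J c w = ((\<lambda>j. \<Sum>q\<in>J. c q * fst (w q) j), (\<Sum>q\<in>J. of_int (c q) *\<^sub>R snd (w q)))"

definition w_conditions :: "nat \<Rightarrow> (nat \<Rightarrow> nat) \<Rightarrow> (nat \<times> nat \<Rightarrow> real^'n)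
     \<Rightarrow> (nat \<times> nat \<Rightarrow> (nat \<times> nat \<Rightarrow> int) \<times> (real^'n)) \<Rightarrow> bool" where
  "w_conditions r n p w \<longleftrightarrow> (\<forall>(k, i)\<in>Idx2 r n.
      bpair (Idx r n) (w (k, i)) (etil p (k, 1)) = -1 \<and>
      bpair (Idx r n) (w (k, i)) (etil p (k, i)) = 1 \<and>
      (\<forall>lj\<in>Idx r n. lj \<noteq> (k, 1) \<and> lj \<noteq> (k, i) \<longrightarrow> bpair (Idx r n) (w (k, i)) (etil p lj) = 0) \<and>
      (\<forall>lj\<in>Idx r n. bpair (Idx r n) (w (k, i)) (ebar lj) = 0))"

end

theory Submission
  imports Defs
begin

text \<open>Each block relation \<open>\<Sum>\<^sub>i p\<^sub>k\<^sub>i = 0\<close> expresses \<open>p\<^sub>k\<^sub>1\<close> through the \<open>p\<^sub>k\<^sub>i\<close> with \<open>i \<ge> 2\<close>,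
  so these vectors together with the \<open>\<xi>\<^sub>j\<close> span \<open>N\<^sub>\<real>\<close>; there are at most \<open>d\<close> of them, hence
  they form a basis of \<open>N\<^sub>\<real>\<close> and a \<open>\<int>\<close>-basis of \<open>N'\<close>. The dual basis vectors \<open>m\<^sub>k\<^sub>i\<close> of the
  \<open>p\<^sub>k\<^sub>i\<close> lie in \<open>M'\<close>, and \<open>w\<^sub>k\<^sub>i = (0; m\<^sub>k\<^sub>i)\<close> satisfies (1)--(3). Conversely, conditions (1)--(3)
  say that \<open>w\<^sub>k\<^sub>i = (0; m)\<close> with \<open>\<langle>m, p\<^sub>l\<^sub>j\<rangle> = \<delta>\<close> on the \<open>p\<^sub>l\<^sub>j\<close> with \<open>j \<ge> 2\<close>, so an element
  \<open>(0; x)\<close> of \<open>Ann(e)'\<close> decomposes uniquely as \<open>(0; x - \<Sum> c\<^sub>k\<^sub>i m\<^sub>k\<^sub>i) + \<Sum> c\<^sub>k\<^sub>i w\<^sub>k\<^sub>i\<close> with the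
  integers \<open>c\<^sub>k\<^sub>i = \<langle>x, p\<^sub>k\<^sub>i\<rangle>\<close>.\<close>

lemma independent_dual_vector_exists:
  fixes B :: "'a::euclidean_space set"
  assumes "independent B"
  shows "\<exists>m. \<forall>b\<in>B. m \<bullet> b = f b"
proof -
  obtain g :: "'a \<Rightarrow> real" where g: "linear g" "\<forall>b\<in>B. g b = f b"
    using linear_independent_extend[OF assms] by blast
  have "adjoint g 1 \<bullet> b = g b" for b
    using adjoint_works[OF \<open>linear g\<close>, of b 1] by (simp add: inner_commute)
  with g show ?thesis by metis
qed

lemma int_span_base: "finite X \<Longrightarrow> v \<in> X \<Longrightarrow> v \<in> int_span X"
  unfolding int_span_def
proof (rule CollectI, rule exI[of _ "\<lambda>u. if u = v then 1 else 0"])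
  assume "finite X" "v \<in> X"
  have "(\<Sum>u\<in>X. of_int (if u = v then 1 else 0) *\<^sub>R u) = (\<Sum>u\<in>X. if u = v then u else 0)"
    by (rule sum.cong) auto
  also have "\<dots> = v" using \<open>finite X\<close> \<open>v \<in> X\<close> by (simp add: sum.delta')
  finally show "v = (\<Sum>u\<in>X. of_int (if u = v then 1 else 0) *\<^sub>R u)" by simp
qed

lemma dual_lattice_int_spanI:
  "(\<And>v. v \<in> X \<Longrightarrow> m \<bullet> v \<in> \<int>) \<Longrightarrow> m \<in> dual_lattice (int_span X)"
  unfolding dual_lattice_def int_span_def
  by (auto simp: inner_sum_right intro!: Ints_sum Ints_mult)

lemma dual_lattice_diff:
  "m \<in> dual_lattice L \<Longrightarrow> m' \<in> dual_lattice L \<Longrightarrow> m - m' \<in> dual_lattice L"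
  unfolding dual_lattice_def by (auto simp: inner_diff_left)

lemma dual_lattice_int_combination:
  "(\<And>q. q \<in> J \<Longrightarrow> u q \<in> dual_lattice L) \<Longrightarrow>
    (\<Sum>q\<in>J. of_int (c q) *\<^sub>R u q) \<in> dual_lattice L"
  unfolding dual_lattice_def by (auto simp: inner_sum_left intro!: Ints_sum Ints_mult)

lemma bpair_ebar: "finite I \<Longrightarrow> j \<in> I \<Longrightarrow> bpair I x (ebar j) = of_int (fst x j)"
  unfolding bpair_def ebar_def by (simp add: if_distrib cong: if_cong)

lemma bpair_etil:
  "finite I \<Longrightarrow> j \<in> I \<Longrightarrow> bpair I x (etil p j) = of_int (fst x j) + snd x \<bullet> p j"
  unfolding bpair_def etil_def by (simp add: if_distrib cong: if_cong)

lemma AnnE_iff: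
  assumes "finite I"
  shows "x \<in> AnnE I M \<longleftrightarrow> fst x = (\<lambda>_. 0) \<and> snd x \<in> M"
  using assms by (auto simp: AnnE_def Mbar_def bpair_ebar)

lemma AnnEEt_iff:
  assumes "finite I"
  shows "a \<in> AnnEEt I M p \<longleftrightarrow> fst a = (\<lambda>_. 0) \<and> snd a \<in> M \<and> (\<forall>j\<in>I. snd a \<bullet> p j = 0)"
  using assms by (auto simp: AnnEEt_def Mbar_def bpair_ebar bpair_etil)

lemma fst_blincomb_eq_0:
  "(\<And>q. q \<in> J \<Longrightarrow> fst (w q) = (\<lambda>_. 0)) \<Longrightarrow> fst (blincomb J c w) = (\<lambda>_. 0)"
  unfolding blincomb_def by simp

lemma inner_snd_blincomb:
  assumes "finite J" "j \<in> J" "\<And>q. q \<in> J \<Longrightarrow> snd (w q) \<bullet> v = (if q = j then 1 else 0)"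
  shows "snd (blincomb J c w) \<bullet> v = of_int (c j)"
proof -
  have "snd (blincomb J c w) \<bullet> v = (\<Sum>q\<in>J. of_int (c q) * (snd (w q) \<bullet> v))"
    unfolding blincomb_def by (simp add: inner_sum_left)
  also have "\<dots> = (\<Sum>q\<in>J. if q = j then of_int (c q) else 0)"
    by (rule sum.cong) (use assms(3) in auto)
  finally show ?thesis using assms(1,2) by simp
qed

lemma Idx_eq_Sigma: "Idx r n = Sigma {1..r} (\<lambda>k. {1..n k})"
  unfolding Idx_def by auto

lemma finite_Idx: "finite (Idx r n)"
  unfolding Idx_eq_Sigma by auto

lemma Idx2_subset_Idx: "Idx2 r n \<subseteq> Idx r n"
  unfolding Idx_def Idx2_def by auto

lemma finite_Idx2: "finite (Idx2 r n)"
  using finite_subset[OF Idx2_subset_Idx finite_Idx] .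

lemma Idx_cases:
  assumes "j \<in> Idx r n"
  obtains "j \<in> Idx2 r n" | k where "j = (k, 1)"
  using assms unfolding Idx_def Idx2_def by force

lemma Idx_eq_Idx2_Un_firsts:
  "\<forall>k\<in>{1..r}. 1 \<le> n k \<Longrightarrow> Idx r n = Idx2 r n \<union> (\<lambda>k. (k, 1)) ` {1..r}"
  unfolding Idx_def Idx2_def by force

lemma card_Idx: "\<forall>k\<in>{1..r}. 1 \<le> n k \<Longrightarrow> card (Idx r n) = card (Idx2 r n) + r"
  by (subst Idx_eq_Idx2_Un_firsts, assumption, subst card_Un_disjoint)
     (use finite_Idx2[of r n] in \<open>auto simp: Idx2_def card_image inj_on_def\<close>)

lemma first_of_block:
  fixes p :: "nat \<times> nat \<Rightarrow> 'a::ab_group_add"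
  assumes "(k, 1) \<in> Idx r n" and "\<forall>k\<in>{1..r}. (\<Sum>i=1..n k. p (k, i)) = 0"
  shows "p (k, 1) = - (\<Sum>i=2..n k. p (k, i))"
proof -
  have k: "k \<in> {1..r}" "1 \<le> n k" using assms(1) unfolding Idx_def by auto
  have "(\<Sum>i=1..n k. p (k, i)) = p (k, 1) + (\<Sum>i=Suc 1..n k. p (k, i))"
    using k by (intro sum.atLeast_Suc_atMost)
  then have "p (k, 1) + (\<Sum>i=2..n k. p (k, i)) = 0"
    using assms(2) k by (simp add: numeral_2_eq_2)
  then show ?thesis by (simp add: eq_neg_iff_add_eq_0)
qed

lemma p_Idx_subset_span_Idx2:
  assumes "\<forall>k\<in>{1..r}. (\<Sum>i=1..n k. p (k, i)) = 0"
  shows "p ` Idx r n \<subseteq> span (p ` Idx2 r n)"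
proof
  fix v assume "v \<in> p ` Idx r n"
  then obtain j where j: "j \<in> Idx r n" "v = p j" by auto
  from j(1) show "v \<in> span (p ` Idx2 r n)"
  proof (cases rule: Idx_cases)
    case 1
    then show ?thesis using j by (simp add: span_base)
  next
    case (2 k)
    have "(k, i) \<in> Idx2 r n" if "i \<in> {2..n k}" for i
      using that j 2 unfolding Idx_def Idx2_def by auto
    then have "(\<Sum>i=2..n k. p (k, i)) \<in> span (p ` Idx2 r n)"
      by (intro span_sum) (auto intro: span_base)
    then show ?thesis
      using j 2 first_of_block[OF _ assms, of k] by (simp add: span_neg)
  qed
qed

lemma inner_vanishing_on_Idx2:
  assumes "\<forall>k\<in>{1..r}. (\<Sum>i=1..n k. p (k, i)) = 0"
    and "\<forall>j\<in>Idx2 r n. m \<bullet> p j = 0" and "j \<in> Idx r n"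
  shows "m \<bullet> p j = 0"
  using assms(3)
proof (cases rule: Idx_cases)
  case 1
  with assms(2) show ?thesis by blast
next
  case (2 k)
  have "(k, i) \<in> Idx2 r n" if "i \<in> {2..n k}" for i
    using that assms(3) 2 unfolding Idx_def Idx2_def by auto
  with assms(2) have "(\<Sum>i=2..n k. m \<bullet> p (k, i)) = 0" by simp
  then show ?thesis
    using 2 assms(3) first_of_block[OF _ assms(1), of k] by (simp add: inner_sum_right)
qed

lemma free_part_basis_span_UNIV:
  assumes "free_part_basis P t \<xi>" and "P \<subseteq> span Q"
  shows "span (Q \<union> \<xi> ` {1..t}) = (UNIV :: (real^'n) set)"
proof -
  have "e \<in> span (Q \<union> \<xi> ` {1..t})" if "e \<in> Basis" for e :: "real^'n"
  proof -
    from that obtain i where "e = axis i 1" unfolding Basis_vec_def by auto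
    then have "e \<in> lattice_pts" unfolding lattice_pts_def axis_def by simp
    moreover have "\<forall>y\<in>lattice_pts. \<exists>c::nat \<Rightarrow> int. y - (\<Sum>j=1..t. of_int (c j) *\<^sub>R \<xi> j) \<in> span P"
      using assms(1) unfolding free_part_basis_def by (elim conjE)
    ultimately obtain c :: "nat \<Rightarrow> int" where c: "e - (\<Sum>j=1..t. of_int (c j) *\<^sub>R \<xi> j) \<in> span P"
      by blast
    have "span P \<subseteq> span Q"
      using assms(2) by (simp add: span_minimal)
    also have "\<dots> \<subseteq> span (Q \<union> \<xi> ` {1..t})"
      by (simp add: span_mono)
    finally have "span P \<subseteq> span (Q \<union> \<xi> ` {1..t})" .
    with c have "e - (\<Sum>j=1..t. of_int (c j) *\<^sub>R \<xi> j) \<in> span (Q \<union> \<xi> ` {1..t})" by blast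
    moreover have "(\<Sum>j=1..t. of_int (c j) *\<^sub>R \<xi> j) \<in> span (Q \<union> \<xi> ` {1..t})"
      by (intro span_sum span_scale span_base) auto
    ultimately show ?thesis using span_add by fastforce
  qed
  then have "span Basis \<subseteq> span (Q \<union> \<xi> ` {1..t})"
    by (intro span_minimal) auto
  then show ?thesis by auto
qed

lemma generators_independent:
  fixes p :: "nat \<times> nat \<Rightarrow> real^'n" and \<xi> :: "nat \<Rightarrow> real^'n"
  assumes blocks_nonempty: "\<forall>k\<in>{1..r}. 1 \<le> n k"
    and block_sums: "\<forall>k\<in>{1..r}. (\<Sum>i=1..n k. p (k, i)) = 0"
    and indep: "inj_on p (Idx2 r n) \<and> independent (p ` Idx2 r n)"
    and xi: "free_part_basis (p ` Idx r n) (CARD('n) + r - card (Idx r n)) \<xi>"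
  shows "independent (p ` Idx2 r n \<union> \<xi> ` {1..CARD('n) + r - card (Idx r n)})"
proof -
  define t where "t = CARD('n) + r - card (Idx r n)"
  define B where "B = p ` Idx2 r n \<union> \<xi> ` {1..t}"
  have span_B: "span B = UNIV"
    unfolding B_def t_def
    using free_part_basis_span_UNIV[OF xi p_Idx_subset_span_Idx2[OF block_sums]] .
  have "card (Idx2 r n) \<le> CARD('n)"
    using indep independent_bound[of "p ` Idx2 r n"] card_image[of p "Idx2 r n"] by simp
  then have "card (Idx2 r n) + t = CARD('n)"
    unfolding t_def card_Idx[OF blocks_nonempty] by simp
  moreover have "card B \<le> card (p ` Idx2 r n) + card (\<xi> ` {1..t})"
    unfolding B_def by (rule card_Un_le)
  moreover have "\<dots> \<le> card (Idx2 r n) + t"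
    using card_image_le[OF finite_Idx2, of p] card_image_le[of "{1..t}" \<xi>] by (simp add: add_mono)
  ultimately have "card B \<le> dim (UNIV :: (real^'n) set)" by simp
  moreover have "finite B" unfolding B_def using finite_Idx2 by simp
  ultimately show ?thesis
    unfolding B_def[symmetric] t_def[symmetric] using span_B
    by (intro card_le_dim_spanning[of B UNIV]) auto
qed

lemma w_family_exists:
  fixes p :: "nat \<times> nat \<Rightarrow> real^'n"
  assumes block_sums: "\<forall>k\<in>{1..r}. (\<Sum>i=1..n k. p (k, i)) = 0"
    and inj: "inj_on p (Idx2 r n)" and indep: "independent (p ` Idx2 r n \<union> X)"
  shows "\<exists>w. (\<forall>q\<in>Idx2 r n. w q \<in> Mbar (Idx r n) (dual_lattice (int_span (p ` Idx2 r n \<union> X))))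
              \<and> w_conditions r n p w"
proof -
  let ?B = "p ` Idx2 r n \<union> X"
  have "\<forall>q. \<exists>m. \<forall>b\<in>?B. m \<bullet> b = (if b = p q then 1 else 0)"
    by (intro allI independent_dual_vector_exists[OF indep])
  then obtain m where m: "\<And>q b. b \<in> ?B \<Longrightarrow> m q \<bullet> b = (if b = p q then 1 else 0)"
    by metis
  have m_Idx2: "m q \<bullet> p j = (if j = q then 1 else 0)" if "q \<in> Idx2 r n" "j \<in> Idx2 r n" for q j
    using m[of "p j" q] that inj by (auto simp: inj_on_def)
  have m_first: "m (k, i) \<bullet> p (l, 1) = (if l = k then -1 else 0)"
    if ki: "(k, i) \<in> Idx2 r n" and l: "(l, 1) \<in> Idx r n" for k i l
  proof -
    have "m (k, i) \<bullet> p (l, 1) = - (\<Sum>i'=2..n l. m (k, i) \<bullet> p (l, i'))"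
      using first_of_block[OF l block_sums] by (simp add: inner_sum_right)
    also have "(\<Sum>i'=2..n l. m (k, i) \<bullet> p (l, i')) = (\<Sum>i'=2..n l. if (l, i') = (k, i) then 1 else 0)"
      using l ki by (intro sum.cong refl m_Idx2) (auto simp: Idx_def Idx2_def)
    also have "\<dots> = (if l = k then 1 else 0)"
      using ki by (auto simp: Idx2_def)
    finally show ?thesis by simp
  qed
  define w where "w q = ((\<lambda>_. 0) :: nat \<times> nat \<Rightarrow> int, m q)" for q
  have "m q \<in> dual_lattice (int_span ?B)" for q
    by (rule dual_lattice_int_spanI) (simp add: m)
  then have "\<forall>q\<in>Idx2 r n. w q \<in> Mbar (Idx r n) (dual_lattice (int_span ?B))"
    by (simp add: w_def Mbar_def)
  moreover have "w_conditions r n p w"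
    unfolding w_conditions_def
  proof (clarify, intro conjI ballI impI)
    fix k i assume ki: "(k, i) \<in> Idx2 r n"
    then have k1: "(k, 1) \<in> Idx r n" and kiI: "(k, i) \<in> Idx r n"
      by (auto simp: Idx_def Idx2_def)
    show "bpair (Idx r n) (w (k, i)) (etil p (k, 1)) = - 1"
      using m_first[OF ki k1] bpair_etil[OF finite_Idx k1, of "w (k, i)" p] by (simp add: w_def)
    show "bpair (Idx r n) (w (k, i)) (etil p (k, i)) = 1"
      using m_Idx2[OF ki ki] bpair_etil[OF finite_Idx kiI, of "w (k, i)" p] by (simp add: w_def)
    show "bpair (Idx r n) (w (k, i)) (ebar lj) = 0" if "lj \<in> Idx r n" for lj
      by (simp add: w_def bpair_ebar[OF finite_Idx that])
    fix lj assume lj: "lj \<in> Idx r n" and other: "lj \<noteq> (k, 1) \<and> lj \<noteq> (k, i)"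
    from lj have "m (k, i) \<bullet> p lj = 0"
      by (cases rule: Idx_cases) (use lj other m_Idx2[OF ki] m_first[OF ki] in auto)
    then show "bpair (Idx r n) (w (k, i)) (etil p lj) = 0"
      using bpair_etil[OF finite_Idx lj, of "w (k, i)" p] by (simp add: w_def)
  qed
  ultimately show ?thesis by blast
qed

lemma w_conditions_fst:
  assumes "w_conditions r n p w" and "\<forall>q\<in>Idx2 r n. w q \<in> Mbar (Idx r n) M"
    and "q \<in> Idx2 r n"
  shows "fst (w q) = (\<lambda>_. 0)"
proof
  fix j show "fst (w q) j = 0"
  proof (cases "j \<in> Idx r n")
    case True
    then show ?thesis
      using assms bpair_ebar[OF finite_Idx True, of "w q"] unfolding w_conditions_def by force
  next
    case False
    then show ?thesis using assms(2,3) unfolding Mbar_def by blast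
  qed
qed

lemma w_conditions_inner:
  assumes "w_conditions r n p w" and "\<forall>q\<in>Idx2 r n. w q \<in> Mbar (Idx r n) M"
    and "q \<in> Idx2 r n" and "j \<in> Idx2 r n"
  shows "snd (w q) \<bullet> p j = (if q = j then 1 else 0)"
proof -
  obtain k i where q: "q = (k, i)" by fastforce
  have j: "j \<in> Idx r n" and "j \<noteq> (k, 1)"
    using assms(4) Idx2_subset_Idx by (auto simp: Idx2_def)
  then have "bpair (Idx r n) (w q) (etil p j) = (if q = j then 1 else 0)"
    using assms(1,3) q unfolding w_conditions_def by fastforce
  then show ?thesis
    using bpair_etil[OF finite_Idx j, of "w q" p] w_conditions_fst[OF assms(1-3)] by simp
qed

lemma AnnE_decomposition:
  fixes p :: "nat \<times> nat \<Rightarrow> real^'n"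
  assumes block_sums: "\<forall>k\<in>{1..r}. (\<Sum>i=1..n k. p (k, i)) = 0"
    and p_in_L: "p ` Idx2 r n \<subseteq> L"
    and w_in: "\<forall>q\<in>Idx2 r n. w q \<in> Mbar (Idx r n) (dual_lattice L)"
    and w: "w_conditions r n p w"
    and x: "x \<in> AnnE (Idx r n) (dual_lattice L)"
  shows "\<exists>!(a, c). a \<in> AnnEEt (Idx r n) (dual_lattice L) p \<and> (\<forall>q. q \<notin> Idx2 r n \<longrightarrow> c q = 0) \<and>
           x = badd a (blincomb (Idx2 r n) c w)"
proof -
  let ?M = "dual_lattice L" and ?J = "Idx2 r n"
  have x0: "fst x = (\<lambda>_. 0)" "snd x \<in> ?M"
    using x by (simp_all add: AnnE_iff finite_Idx)
  have fst_blincomb: "fst (blincomb ?J c w) = (\<lambda>_. 0)" for c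
    using w_conditions_fst[OF w w_in] by (rule fst_blincomb_eq_0)
  have inner_blincomb: "snd (blincomb ?J c w) \<bullet> p q = of_int (c q)" if "q \<in> ?J" for c q
    using that w_conditions_inner[OF w w_in _ that] by (intro inner_snd_blincomb finite_Idx2)
  have blincomb_in: "snd (blincomb ?J c w) \<in> ?M" for c
    unfolding blincomb_def using w_in by (auto simp: Mbar_def intro: dual_lattice_int_combination)
  have coeff_forced: "of_int (c q) = snd x \<bullet> p q"
    if "a \<in> AnnEEt (Idx r n) ?M p" "x = badd a (blincomb ?J c w)" "q \<in> ?J" for a c q
    using that subsetD[OF Idx2_subset_Idx that(3)] inner_blincomb[OF that(3)]
    by (auto simp: AnnEEt_iff finite_Idx badd_def inner_add_left)
  define c0 where "c0 q = (if q \<in> ?J then \<lfloor>snd x \<bullet> p q\<rfloor> else 0)" for q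
  define a0 where "a0 = ((\<lambda>_. 0) :: nat \<times> nat \<Rightarrow> int, snd x - snd (blincomb ?J c0 w))"
  have c0: "of_int (c0 q) = snd x \<bullet> p q" if "q \<in> ?J" for q
  proof -
    have "snd x \<bullet> p q \<in> \<int>" using x0(2) p_in_L that unfolding dual_lattice_def by blast
    then show ?thesis using that by (simp add: c0_def)
  qed
  have "a0 \<in> AnnEEt (Idx r n) ?M p"
  proof -
    have "\<forall>j\<in>?J. snd a0 \<bullet> p j = 0"
      by (simp add: a0_def inner_diff_left inner_blincomb c0)
    then show ?thesis
      using inner_vanishing_on_Idx2[OF block_sums]
      by (simp add: AnnEEt_iff finite_Idx, simp add: a0_def dual_lattice_diff x0 blincomb_in)
  qed
  moreover have "x = badd a0 (blincomb ?J c0 w)"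
    using x0(1) fst_blincomb by (simp add: a0_def badd_def prod_eq_iff)
  moreover have "(a, c) = (a0, c0)"
    if "a \<in> AnnEEt (Idx r n) ?M p" "\<forall>q. q \<notin> ?J \<longrightarrow> c q = 0" "x = badd a (blincomb ?J c w)" for a c
  proof -
    have "c q = c0 q" for q
    proof (cases "q \<in> ?J")
      case True
      then have "real_of_int (c q) = of_int (c0 q)"
        using coeff_forced[OF that(1,3)] c0 by simp
      then show ?thesis by linarith
    next
      case False
      with that(2) show ?thesis unfolding c0_def by presburger
    qed
    then have "c = c0" ..
    moreover have "a = a0"
      using that(1,3) x0(1) fst_blincomb
      by (auto simp: AnnEEt_iff finite_Idx a0_def badd_def prod_eq_iff \<open>c = c0\<close>)
    ultimately show ?thesis by simp
  qed
  ultimately show ?thesis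
    by (intro ex1I[of _ "(a0, c0)"]) (auto simp: c0_def)
qed

theorem lemma4p3:
  fixes \<Delta> :: "nat \<times> nat \<Rightarrow> (real^'n) set"
    and r :: nat and n :: "nat \<Rightarrow> nat"
    and p :: "nat \<times> nat \<Rightarrow> real^'n"
    and \<xi> :: "nat \<Rightarrow> real^'n"
  assumes blocks_nonempty: "\<forall>k\<in>{1..r}. 1 \<le> n k"
    and nef: "nef_partition (Idx r n) \<Delta>"
    and p_in: "\<forall>j\<in>Idx r n. p j \<in> lattice_pts \<and> p j \<in> nabla (Idx r n) \<Delta> j"
    and etil_Kdual: "\<forall>j\<in>Idx r n. ((\<lambda>l. if l = j then 1 else 0), p j) \<in> Kdual (Idx r n) \<Delta>"
    and sum_p: "(\<Sum>j\<in>Idx r n. p j) = 0"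
    and r_def: "r = card (Idx r n) - dim (p ` Idx r n)"
    and block_sums: "\<forall>k\<in>{1..r}. (\<Sum>i=1..n k. p (k, i)) = 0"
    and indep: "inj_on p (Idx2 r n) \<and> independent (p ` Idx2 r n)"
    and xi: "free_part_basis (p ` Idx r n) (CARD('n) + r - card (Idx r n)) \<xi>"
  shows "let N' = int_span (p ` Idx2 r n \<union> \<xi> ` {1..CARD('n) + r - card (Idx r n)});
             M' = dual_lattice N'
         in (\<exists>w. (\<forall>q\<in>Idx2 r n. w q \<in> Mbar (Idx r n) M') \<and> w_conditions r n p w) \<and>
            (\<forall>w. (\<forall>q\<in>Idx2 r n. w q \<in> Mbar (Idx r n) M') \<and> w_conditions r n p w \<longrightarrow>
               (\<forall>x\<in>AnnE (Idx r n) M'.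
                  \<exists>!(a, c). a \<in> AnnEEt (Idx r n) M' p \<and> (\<forall>q. q \<notin> Idx2 r n \<longrightarrow> c q = 0) \<and>
                    x = badd a (blincomb (Idx2 r n) c w)))"
proof -
  define X where "X = \<xi> ` {1..CARD('n) + r - card (Idx r n)}"
  define M' where "M' = dual_lattice (int_span (p ` Idx2 r n \<union> X))"
  have indep_B: "independent (p ` Idx2 r n \<union> X)"
    unfolding X_def using generators_independent[OF blocks_nonempty block_sums indep xi] .
  then have p_in_N': "p ` Idx2 r n \<subseteq> int_span (p ` Idx2 r n \<union> X)"
    using int_span_base independent_imp_finite by blast
  have w_exists: "\<exists>w. (\<forall>q\<in>Idx2 r n. w q \<in> Mbar (Idx r n) M') \<and> w_conditions r n p w"
    unfolding M'_def using w_family_exists[OF block_sums conjunct1[OF indep] indep_B] .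
  have decomposition:
    "\<exists>!(a, c). a \<in> AnnEEt (Idx r n) M' p \<and> (\<forall>q. q \<notin> Idx2 r n \<longrightarrow> c q = 0) \<and>
       x = badd a (blincomb (Idx2 r n) c w)"
    if "(\<forall>q\<in>Idx2 r n. w q \<in> Mbar (Idx r n) M') \<and> w_conditions r n p w" and "x \<in> AnnE (Idx r n) M'"
    for w x
    using that unfolding M'_def by (intro AnnE_decomposition[OF block_sums p_in_N']) auto
  show ?thesis
    unfolding Let_def X_def[symmetric] M'_def[symmetric]
    by (intro conjI allI impI ballI w_exists decomposition) simp_all
qed

end
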